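(* For every $n\ge1$ and every $\delta>0$, \[ \lim_{\substack{x\to\infty\\ \{\log_2 x\}\ge\delta}}\frac{\mathbb{P}\{S_n>x\}}{\mathbb{P}\{X>x\}}=n, \] and moreover \[ n=\liminf_{x\to\infty}x\,\mathbb{P}\{S_n>x\}<\limsup_{x\to\infty}x\,\mathbb{P}\{S_n>x\}=2n . \]
   Context: $X,X_1,X_2,\ldots$ are iid St.~Petersburg random variables: $\mathbb{P}\{X=2^k\}=2^{-k}$, $k\in\{1,2,\ldots\}$; $S_n=X_1+\dots+X_n$; $\{y\}$ denotes the fractional part of $y$. *)

theory Defs
  imports "HOL-Probability.Probability"
begin

text \<open>St. Petersburg distribution: P{X = 2^k} = 2^-k for k = 1,2,...
  (geometric_pmf (1/2) gives n with probability 2^-(n+1), n = 0,1,...)\<close>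
definition stpeter :: "real pmf" where
  "stpeter = map_pmf (\<lambda>n. 2 ^ (n + 1)) (geometric_pmf (1/2))"

fun stpeter_sum :: "nat \<Rightarrow> real pmf" where
  "stpeter_sum 0 = return_pmf 0"
| "stpeter_sum (Suc n) = bind_pmf (stpeter_sum n) (\<lambda>s. map_pmf (\<lambda>x. s + x) stpeter)"

end

theory Submission
  imports Defs
begin

text \<open>
  Let T(x) = P{X > x}. Since T(x) = 2^-m for 2^m \<le> x < 2^(m+1), the product x T(x) oscillates
  in [1, 2] and T only depends on \<lfloor>log2 x\<rfloor>. From P{S_n \<le> x} \<le> P{X \<le> x}^n we get
  P{S_n > x} \<ge> n T(x) - (n T(x))^2. Conversely, S_(n+1) > x forces S_n > c x, or X > c x, or both
  S_n and X to exceed (1 - c) x, and the last event has probability O(1/x^2). Inducting on n with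
  c = 2^(-\<delta>/2), which keeps T(c x) = T(x) whenever {log2 x} \<ge> \<delta>, gives
  P{S_n > x} \<le> (n + \<epsilon>) T(x) there; with c close to 1 it gives x P{S_n > x} \<le> 2n + \<epsilon> for all
  large x. The values n and 2n are approached along x = 2^k (1 + t) with t \<rightarrow> 0 and along
  x = 2^(k+1) - 1, where x T(x) is close to 1 and to 2 respectively.
\<close>

lemma measure_pmf_prob_Times:
  "measure_pmf.prob (pair_pmf M N) (A \<times> B) = measure_pmf.prob M A * measure_pmf.prob N B"
proof -
  have "measure_pmf.prob (pair_pmf M N) (A \<times> B)
      = measure_pmf.prob (pair_pmf M N) ((A \<inter> set_pmf M) \<times> (B \<inter> set_pmf N))"
    by (subst measure_Int_set_pmf[symmetric]) (auto intro!: arg_cong2[where f = measure])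
  also have "\<dots> = measure_pmf.prob M (A \<inter> set_pmf M) * measure_pmf.prob N (B \<inter> set_pmf N)"
    by (rule measure_pmf_prob_product) auto
  finally show ?thesis
    by (simp add: measure_Int_set_pmf)
qed

lemma prob_geometric_pmf_atLeast:
  assumes "0 < p" "p \<le> 1"
  shows "measure_pmf.prob (geometric_pmf p) {m..} = (1 - p) ^ m"
proof -
  have "measure_pmf.prob (geometric_pmf p) {..<m} = (\<Sum>j<m. (1 - p) ^ j * p)"
    using assms by (subst measure_measure_pmf_finite) auto
  also have "\<dots> = 1 - (1 - p) ^ m"
    using assms by (simp add: sum_distrib_right[symmetric] sum_gp_strict)
  finally show ?thesis
    using measure_pmf.prob_compl[of "{..<m}" "geometric_pmf p"]
    by (simp add: Compl_eq_Diff_UNIV[symmetric])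
qed

lemma one_minus_power_le:
  fixes t :: real
  assumes "0 \<le> t" "t \<le> 1"
  shows "(1 - t) ^ n \<le> 1 - n * t + (n * t)\<^sup>2"
proof (induction n)
  case (Suc n)
  have "(1 - t) ^ Suc n \<le> (1 - n * t + (n * t)\<^sup>2) * (1 - t)"
    using mult_right_mono[OF Suc, of "1 - t"] assms by (simp add: mult.commute)
  also have "\<dots> \<le> 1 - Suc n * t + (Suc n * t)\<^sup>2"
    using assms by (simp add: algebra_simps power2_eq_square)
  finally show ?case .
qed simp

lemma floor_frac_diff:
  fixes a d :: real
  assumes "0 \<le> d" "d \<le> frac a"
  shows "\<lfloor>a - d\<rfloor> = \<lfloor>a\<rfloor>" "frac (a - d) = frac a - d"
proof -
  show "\<lfloor>a - d\<rfloor> = \<lfloor>a\<rfloor>"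
    using assms frac_lt_1[of a] by (simp add: floor_eq_iff frac_def)
  then show "frac (a - d) = frac a - d"
    by (simp add: frac_def)
qed

lemma floor_log2_bounds:
  fixes x :: real
  assumes "1 \<le> x"
  shows "2 ^ nat \<lfloor>log 2 x\<rfloor> \<le> x" "x < 2 ^ (nat \<lfloor>log 2 x\<rfloor> + 1)"
proof -
  have "real (nat \<lfloor>log 2 x\<rfloor>) = \<lfloor>log 2 x\<rfloor>"
    using assms by simp
  then have "2 powr nat \<lfloor>log 2 x\<rfloor> \<le> x \<and> x < 2 powr (nat \<lfloor>log 2 x\<rfloor> + 1)"
    using floor_log_eq_powr_iff[of x 2 "\<lfloor>log 2 x\<rfloor>"] assms by (simp add: add.commute)
  then show "2 ^ nat \<lfloor>log 2 x\<rfloor> \<le> x" "x < 2 ^ (nat \<lfloor>log 2 x\<rfloor> + 1)"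
    by (simp_all add: powr_realpow[symmetric] powr_add)
qed

lemma eventually_at_top_mult_left:
  fixes c :: real
  assumes "0 < c" "eventually P at_top"
  shows "eventually (\<lambda>x. P (c * x)) at_top"
proof -
  have "filterlim (\<lambda>x. c * x) at_top at_top"
    by (rule filterlim_tendsto_pos_mult_at_top[OF tendsto_const assms(1) filterlim_ident])
  then show ?thesis
    using assms(2) by (simp add: filterlim_iff)
qed

lemma filterlim_sequentially_at_top_if_ge:
  "(\<And>k. real k \<le> f k) \<Longrightarrow> filterlim f at_top sequentially"
  by (rule filterlim_at_top_mono[OF filterlim_real_sequentially]) auto

lemma Limsup_filter_mono: "F \<le> G \<Longrightarrow> Limsup F f \<le> Limsup G f"
  unfolding Limsup_def le_filter_def by (auto intro!: INF_superset_mono)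

lemma Liminf_filter_antimono: "F \<le> G \<Longrightarrow> Liminf G f \<le> Liminf F f"
  unfolding Liminf_def le_filter_def by (auto intro!: SUP_subset_mono)

lemma Limsup_compose_filterlim_le:
  "filterlim g G F \<Longrightarrow> Limsup F (\<lambda>x. f (g x)) \<le> Limsup G f"
  unfolding filterlim_def by (rule order.trans[OF Limsup_filtermap_ge Limsup_filter_mono])

lemma Liminf_compose_filterlim_ge:
  "filterlim g G F \<Longrightarrow> Liminf G f \<le> Liminf F (\<lambda>x. f (g x))"
  unfolding filterlim_def by (rule order.trans[OF Liminf_filter_antimono Liminf_filtermap_le])

definition tail :: "real pmf \<Rightarrow> real \<Rightarrow> real" where
  "tail p x = measure_pmf.prob p {x<..}"

lemma tail_nonneg [simp]: "0 \<le> tail p x"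
  by (simp add: tail_def)

lemma tail_le_1 [simp]: "tail p x \<le> 1"
  by (simp add: tail_def)

lemma prob_atMost_eq_1_minus_tail: "measure_pmf.prob p {..x} = 1 - tail p x"
  using measure_pmf.prob_compl[of "{x<..}" p] by (simp add: tail_def Compl_eq_Diff_UNIV[symmetric])

definition add_pmf :: "real pmf \<Rightarrow> real pmf \<Rightarrow> real pmf" where
  "add_pmf p q = map_pmf (\<lambda>(s, y). s + y) (pair_pmf p q)"

lemma tail_add_pmf_le:
  assumes "0 < c" "c < 1"
  shows "tail (add_pmf p q) x
           \<le> tail p (c * x) + tail q (c * x) + tail p ((1 - c) * x) * tail q ((1 - c) * x)"
proof -
  let ?P = "measure_pmf.prob (pair_pmf p q)"
  have "{z. x < fst z + snd z}
          \<subseteq> ({c * x<..} \<times> UNIV \<union> UNIV \<times> {c * x<..}) \<union> {(1 - c) * x<..} \<times> {(1 - c) * x<..}"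
    by (auto simp: algebra_simps)
  then have "tail (add_pmf p q) x
      \<le> ?P ({c * x<..} \<times> UNIV \<union> UNIV \<times> {c * x<..}) + ?P ({(1 - c) * x<..} \<times> {(1 - c) * x<..})"
    unfolding tail_def add_pmf_def
    by (auto simp: vimage_def case_prod_beta
             intro!: order.trans[OF measure_pmf.finite_measure_mono measure_Un_le])
  also have "?P ({c * x<..} \<times> UNIV \<union> UNIV \<times> {c * x<..}) \<le> tail p (c * x) + tail q (c * x)"
    using measure_Un_le[of "{c * x<..} \<times> UNIV" "pair_pmf p q" "UNIV \<times> {c * x<..}"]
    by (simp add: measure_pmf_prob_Times tail_def)
  finally show ?thesis
    by (simp add: measure_pmf_prob_Times tail_def)
qed

lemma tail_add_pmf_ge:
  assumes "set_pmf p \<subseteq> {0..}" "set_pmf q \<subseteq> {0..}"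
  shows "1 - tail (add_pmf p q) x \<le> (1 - tail p x) * (1 - tail q x)"
proof -
  let ?P = "measure_pmf.prob (pair_pmf p q)"
  have "1 - tail (add_pmf p q) x = ?P {z. fst z + snd z \<le> x}"
    by (simp add: prob_atMost_eq_1_minus_tail[symmetric] add_pmf_def vimage_def case_prod_beta)
  also have "\<dots> = ?P ({z. fst z + snd z \<le> x} \<inter> set_pmf (pair_pmf p q))"
    by (rule measure_Int_set_pmf[symmetric])
  also have "\<dots> \<le> ?P ({..x} \<times> {..x})"
    using assms by (intro measure_pmf.finite_measure_mono) force+
  finally show ?thesis
    by (simp add: measure_pmf_prob_Times prob_atMost_eq_1_minus_tail)
qed

lemma tail_stpeter_eq:
  assumes "2 ^ m \<le> x" "x < 2 ^ (m + 1)"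
  shows "tail stpeter x = 1 / 2 ^ m"
proof -
  have "x < 2 ^ (k + 1) \<longleftrightarrow> m \<le> k" for k :: nat
  proof
    assume "x < 2 ^ (k + 1)"
    then have "(2::real) ^ m < 2 ^ (k + 1)"
      using assms(1) by linarith
    then show "m \<le> k"
      by (subst (asm) power_strict_increasing_iff) auto
  next
    assume "m \<le> k"
    then have "(2::real) ^ (m + 1) \<le> 2 ^ (k + 1)"
      by (intro power_increasing) auto
    then show "x < 2 ^ (k + 1)"
      using assms(2) by linarith
  qed
  then have "(\<lambda>k::nat. (2::real) ^ (k + 1)) -` {x<..} = {m..}"
    by auto
  then show ?thesis
    by (simp add: tail_def stpeter_def prob_geometric_pmf_atLeast power_one_over)
qed

lemma tail_stpeter_floor_log:
  "1 \<le> x \<Longrightarrow> tail stpeter x = 1 / 2 ^ nat \<lfloor>log 2 x\<rfloor>"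
  by (intro tail_stpeter_eq floor_log2_bounds)

lemma tail_stpeter_bounds:
  assumes "1 \<le> x"
  shows "1 \<le> x * tail stpeter x" "x * tail stpeter x \<le> 2"
  using floor_log2_bounds[OF assms] tail_stpeter_floor_log[OF assms]
  by (simp_all add: divide_le_eq)

lemma tail_stpeter_pos: "1 \<le> x \<Longrightarrow> 0 < tail stpeter x"
  by (simp add: tail_stpeter_floor_log)

lemma tail_stpeter_le:
  assumes "0 < x"
  shows "tail stpeter x \<le> 2 / x"
proof (cases "1 \<le> x")
  case True
  then show ?thesis
    using tail_stpeter_bounds(2)[OF True] assms by (simp add: field_simps)
next
  case False
  then have "1 \<le> 2 / x"
    using assms by (simp add: field_simps)
  then show ?thesis
    using tail_le_1[of stpeter x] by linarith
qed

lemma stpeter_sum_Suc_eq_add_pmf: "stpeter_sum (Suc n) = add_pmf (stpeter_sum n) stpeter"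
  by (simp add: add_pmf_def pair_pmf_def map_bind_pmf map_pmf_def bind_assoc_pmf bind_return_pmf)

lemma set_pmf_stpeter_sum_nonneg: "set_pmf (stpeter_sum n) \<subseteq> {0..}"
  by (induction n) (auto simp: stpeter_def)

lemma one_minus_tail_stpeter_sum_le_power:
  "1 - tail (stpeter_sum n) x \<le> (1 - tail stpeter x) ^ n"
proof (induction n)
  case (Suc n)
  have "1 - tail (stpeter_sum (Suc n)) x \<le> (1 - tail (stpeter_sum n) x) * (1 - tail stpeter x)"
    unfolding stpeter_sum_Suc_eq_add_pmf
    by (intro tail_add_pmf_ge set_pmf_stpeter_sum_nonneg) (auto simp: stpeter_def)
  also have "\<dots> \<le> (1 - tail stpeter x) ^ Suc n"
    using mult_right_mono[OF Suc, of "1 - tail stpeter x"] by (simp add: mult.commute)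
  finally show ?case .
qed (simp add: tail_def)

lemma tail_stpeter_sum_ge:
  "n * tail stpeter x - (n * tail stpeter x)\<^sup>2 \<le> tail (stpeter_sum n) x"
  using one_minus_tail_stpeter_sum_le_power[of n x] one_minus_power_le[of "tail stpeter x" n]
  by simp

lemma tail_stpeter_shift_frac_log:
  assumes "0 \<le> d" "d \<le> frac (log 2 x)" "1 \<le> 2 powr (- d) * x"
  shows "tail stpeter (2 powr (- d) * x) = tail stpeter x"
    and "frac (log 2 (2 powr (- d) * x)) = frac (log 2 x) - d"
proof -
  have c: "0 < 2 powr (- d)" "2 powr (- d) \<le> (1::real)"
    using ge_one_powr_ge_zero[of 2 d] assms(1) by (simp_all add: powr_minus inverse_le_1_iff)
  then have "0 < x"
    using assms(3) zero_less_mult_pos[of "2 powr (- d)" x] by linarith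
  then have x: "1 \<le> x"
    using c assms(3) mult_right_mono[OF c(2), of x] by linarith
  have log: "log 2 (2 powr (- d) * x) = log 2 x - d"
    using x by (simp add: log_mult)
  show "tail stpeter (2 powr (- d) * x) = tail stpeter x"
    using assms x floor_frac_diff by (simp add: tail_stpeter_floor_log log)
  show "frac (log 2 (2 powr (- d) * x)) = frac (log 2 x) - d"
    using assms floor_frac_diff by (simp add: log)
qed

lemma tail_stpeter_sum_le_const_div: "\<exists>C\<ge>0. \<forall>x>0. tail (stpeter_sum n) x \<le> C / x"
proof (induction n)
  case 0
  show ?case
    by (intro exI[of _ 0]) (simp add: tail_def)
next
  case (Suc n)
  then obtain C where C: "0 \<le> C" "\<And>x. 0 < x \<Longrightarrow> tail (stpeter_sum n) x \<le> C / x"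
    by blast
  have "tail (stpeter_sum (Suc n)) x \<le> (2 * C + 8) / x" if "0 < x" for x
  proof -
    let ?F = "tail (stpeter_sum n) (x / 2)" and ?T = "tail stpeter (x / 2)"
    have "tail (stpeter_sum (Suc n)) x \<le> ?F + ?T + ?F * ?T"
      unfolding stpeter_sum_Suc_eq_add_pmf
      using tail_add_pmf_le[of "1/2" "stpeter_sum n" stpeter x] by simp
    also have "\<dots> \<le> ?F + 2 * ?T"
      using mult_right_mono[OF tail_le_1[of "stpeter_sum n" "x / 2"] tail_nonneg[of stpeter "x / 2"]]
      by simp
    also have "\<dots> \<le> C / (x / 2) + 2 * (2 / (x / 2))"
      using that by (intro add_mono mult_left_mono C(2) tail_stpeter_le) auto
    finally show ?thesis
      by (simp add: add_divide_distrib mult.commute)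
  qed
  then show ?case
    using C(1) by (intro exI[of _ "2 * C + 8"]) auto
qed

lemma tail_stpeter_sum_Suc_eventually_le:
  assumes "0 < c" "c < 1" "0 < e"
  shows "\<forall>\<^sub>F x in at_top. tail (stpeter_sum (Suc n)) x
                           \<le> tail (stpeter_sum n) (c * x) + tail stpeter (c * x) + e / x"
proof -
  obtain C where C: "0 \<le> C" "\<And>x. 0 < x \<Longrightarrow> tail (stpeter_sum n) x \<le> C / x"
    using tail_stpeter_sum_le_const_div by blast
  define \<eta> where "\<eta> = 1 - c"
  have \<eta>: "0 < \<eta>"
    using assms by (simp add: \<eta>_def)
  have "tail (stpeter_sum n) (\<eta> * x) * tail stpeter (\<eta> * x) \<le> e / x"
    if x: "max 1 (2 * C / (\<eta>\<^sup>2 * e)) \<le> x" for x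
  proof -
    have "0 < \<eta> * x"
      using \<eta> x by simp
    then have "tail (stpeter_sum n) (\<eta> * x) * tail stpeter (\<eta> * x) \<le> C / (\<eta> * x) * (2 / (\<eta> * x))"
      using C tail_stpeter_le by (intro mult_mono) auto
    also have "\<dots> = (2 * C / (\<eta>\<^sup>2 * x)) / x"
      by (simp add: field_simps power2_eq_square)
    also have "\<dots> \<le> e / x"
      using x \<eta> assms(3) by (intro divide_right_mono) (auto simp: field_simps)
    finally show ?thesis .
  qed
  then have "\<forall>\<^sub>F x in at_top. tail (stpeter_sum n) (\<eta> * x) * tail stpeter (\<eta> * x) \<le> e / x"
    unfolding eventually_at_top_linorder by blast
  then show ?thesis
  proof eventually_elim
    case (elim x)
    then show ?case
      unfolding stpeter_sum_Suc_eq_add_pmf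
      using tail_add_pmf_le[OF assms(1,2), of "stpeter_sum n" stpeter x] by (simp add: \<eta>_def)
  qed
qed

lemma tail_stpeter_sum_eventually_le_on_frac_log:
  assumes "0 < \<delta>" "0 < e"
  shows "\<forall>\<^sub>F x in at_top. \<delta> \<le> frac (log 2 x) \<longrightarrow> tail (stpeter_sum n) x \<le> (n + e) * tail stpeter x"
  using assms
proof (induction n arbitrary: \<delta> e)
  case 0
  show ?case
    using 0 by (intro eventually_mono[OF eventually_ge_at_top[of 0]]) (simp add: tail_def)
next
  case (Suc n)
  define c :: real where "c = 2 powr (- (\<delta> / 2))"
  have c: "0 < c" "c < 1"
    using Suc.prems by (simp_all add: c_def powr_less_one)
  have "\<forall>\<^sub>F x in at_top. \<delta> / 2 \<le> frac (log 2 (c * x))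
          \<longrightarrow> tail (stpeter_sum n) (c * x) \<le> (n + e / 2) * tail stpeter (c * x)"
    using eventually_at_top_mult_left[OF c(1) Suc.IH[of "\<delta> / 2" "e / 2"]] Suc.prems by simp
  moreover have "\<forall>\<^sub>F x in at_top. tail (stpeter_sum (Suc n)) x
                   \<le> tail (stpeter_sum n) (c * x) + tail stpeter (c * x) + (e / 2) / x"
    using Suc.prems c by (intro tail_stpeter_sum_Suc_eventually_le) auto
  moreover have "\<forall>\<^sub>F x in at_top. 1 / c \<le> x"
    by (rule eventually_ge_at_top)
  ultimately show ?case
  proof eventually_elim
    case (elim x)
    have "1 \<le> 1 / c"
      using c by simp
    then have x: "1 \<le> x" "1 \<le> c * x"
      using elim(3) c by (linarith, simp add: field_simps)
    show ?case
    proof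
      assume "\<delta> \<le> frac (log 2 x)"
      then have "\<delta> / 2 \<le> frac (log 2 (c * x))" and T: "tail stpeter (c * x) = tail stpeter x"
        using tail_stpeter_shift_frac_log[of "\<delta> / 2" x, folded c_def] x(2) Suc.prems by simp_all
      moreover have "(e / 2) / x \<le> (e / 2) * tail stpeter x"
        using tail_stpeter_bounds(1)[OF x(1)] x Suc.prems by (simp add: field_simps)
      ultimately show "tail (stpeter_sum (Suc n)) x \<le> (Suc n + e) * tail stpeter x"
        using elim(1,2) by (simp add: algebra_simps)
    qed
  qed
qed

lemma mult_tail_stpeter_sum_eventually_le:
  fixes e :: real
  assumes "0 < e"
  shows "\<forall>\<^sub>F x in at_top. x * tail (stpeter_sum n) x \<le> 2 * real n + e"
  using assms
proof (induction n arbitrary: e)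
  case 0
  show ?case
    using 0 by (intro eventually_mono[OF eventually_ge_at_top[of 0]]) (simp add: tail_def)
next
  case (Suc n)
  define c where "c = (2 * real n + 2 + e / 4) / (2 * real n + 2 + e / 2)"
  have c: "0 < c" "c < 1"
    using Suc.prems by (simp_all add: c_def)
  have "\<forall>\<^sub>F x in at_top. c * x * tail (stpeter_sum n) (c * x) \<le> 2 * real n + e / 4"
    using eventually_at_top_mult_left[OF c(1) Suc.IH[of "e / 4"]] Suc.prems by simp
  moreover have "\<forall>\<^sub>F x in at_top. tail (stpeter_sum (Suc n)) x
                   \<le> tail (stpeter_sum n) (c * x) + tail stpeter (c * x) + (e / 2) / x"
    using Suc.prems c by (intro tail_stpeter_sum_Suc_eventually_le) auto
  moreover have "\<forall>\<^sub>F x in at_top. (1::real) \<le> x"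
    by (rule eventually_ge_at_top)
  ultimately show ?case
  proof eventually_elim
    case (elim x)
    have "x * tail (stpeter_sum (Suc n)) x
            \<le> x * tail (stpeter_sum n) (c * x) + x * tail stpeter (c * x) + e / 2"
      using mult_left_mono[OF elim(2), of x] elim(3) by (simp add: algebra_simps)
    moreover have "c * x * tail stpeter (c * x) \<le> 2"
      using tail_stpeter_le[of "c * x"] c elim(3) by (simp add: field_simps)
    ultimately have "c * (x * tail (stpeter_sum (Suc n)) x) \<le> (2 * real n + 2 + e / 4) + c * (e / 2)"
      using elim(1) mult_left_mono[of _ _ c] c by (fastforce simp: algebra_simps)
    also have "2 * real n + 2 + e / 4 = c * (2 * real n + 2 + e / 2)"
      using Suc.prems by (simp add: c_def)
    finally have "c * (x * tail (stpeter_sum (Suc n)) x) \<le> c * (2 * real (Suc n) + e)"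
      by (simp add: algebra_simps)
    then show ?case
      using c by simp
  qed
qed

lemma tail_stpeter_sum_ratio_ge:
  assumes "1 \<le> x"
  shows "n - 2 * (real n)\<^sup>2 / x \<le> tail (stpeter_sum n) x / tail stpeter x"
proof -
  let ?T = "tail stpeter x"
  have "n - 2 * (real n)\<^sup>2 / x \<le> n - (real n)\<^sup>2 * ?T"
    using mult_left_mono[OF tail_stpeter_le[of x], of "(real n)\<^sup>2"] assms by (simp add: mult.commute)
  also have "\<dots> = (n * ?T - (n * ?T)\<^sup>2) / ?T"
    using tail_stpeter_pos[OF assms] by (simp add: field_simps power2_eq_square)
  also have "\<dots> \<le> tail (stpeter_sum n) x / ?T"
    using tail_stpeter_pos[OF assms] by (intro divide_right_mono tail_stpeter_sum_ge) auto
  finally show ?thesis .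
qed

lemma tail_stpeter_sum_ratio_le_mult:
  assumes "1 \<le> x"
  shows "tail (stpeter_sum n) x / tail stpeter x \<le> x * tail (stpeter_sum n) x"
  using mult_right_mono[OF tail_stpeter_bounds(1)[OF assms], of "tail (stpeter_sum n) x"]
    tail_stpeter_pos[OF assms]
  by (simp add: divide_le_eq mult_ac)

lemma tail_stpeter_sum_ratio_tendsto:
  assumes "0 < \<delta>"
  shows "((\<lambda>x. tail (stpeter_sum n) x / tail stpeter x) \<longlongrightarrow> n)
           (at_top \<sqinter> principal {x. \<delta> \<le> frac (log 2 x)})"
proof (rule tendstoI)
  fix e :: real
  assume e: "0 < e"
  have "\<forall>\<^sub>F x in at_top. \<delta> \<le> frac (log 2 x) \<longrightarrow> tail (stpeter_sum n) x \<le> (n + e / 2) * tail stpeter x"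
    using assms e by (intro tail_stpeter_sum_eventually_le_on_frac_log) auto
  moreover have "\<forall>\<^sub>F x in at_top. max 1 (4 * (real n)\<^sup>2 / e) \<le> x"
    by (rule eventually_ge_at_top)
  ultimately have "\<forall>\<^sub>F x in at_top. \<delta> \<le> frac (log 2 x)
                      \<longrightarrow> dist (tail (stpeter_sum n) x / tail stpeter x) n < e"
  proof eventually_elim
    case (elim x)
    then have x: "1 \<le> x" "4 * (real n)\<^sup>2 / e \<le> x"
      by auto
    have "2 * (real n)\<^sup>2 / x \<le> e / 2"
      using x e by (simp add: field_simps)
    then have "n - e / 2 \<le> tail (stpeter_sum n) x / tail stpeter x"
      using tail_stpeter_sum_ratio_ge[OF x(1), of n] by linarith
    moreover have "\<delta> \<le> frac (log 2 x) \<Longrightarrow> tail (stpeter_sum n) x / tail stpeter x \<le> n + e / 2"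
      using elim(1) tail_stpeter_pos[OF x(1)] by (simp add: divide_le_eq)
    ultimately show ?case
      using e by (auto simp: dist_real_def abs_le_iff)
  qed
  then show "\<forall>\<^sub>F x in at_top \<sqinter> principal {x. \<delta> \<le> frac (log 2 x)}.
               dist (tail (stpeter_sum n) x / tail stpeter x) n < e"
    by (simp add: eventually_inf_principal)
qed

lemma Liminf_tail_stpeter_sum_ge:
  "ereal n \<le> Liminf at_top (\<lambda>x. ereal (x * tail (stpeter_sum n) x))"
proof -
  have "((\<lambda>x. 2 * (real n)\<^sup>2 / x) \<longlongrightarrow> 0) at_top"
    by (intro tendsto_divide_0[OF tendsto_const] filterlim_at_top_imp_at_infinity filterlim_ident)
  then have "((\<lambda>x. ereal (n - 2 * (real n)\<^sup>2 / x)) \<longlongrightarrow> ereal (real n - 0)) at_top"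
    by (intro tendsto_ereal tendsto_diff tendsto_const)
  then have "ereal n = Liminf at_top (\<lambda>x. ereal (n - 2 * (real n)\<^sup>2 / x))"
    by (intro lim_imp_Liminf[symmetric]) simp_all
  also have "\<dots> \<le> Liminf at_top (\<lambda>x. ereal (x * tail (stpeter_sum n) x))"
  proof (intro Liminf_mono eventually_mono[OF eventually_ge_at_top[of 1]])
    fix x :: real
    assume "1 \<le> x"
    then show "ereal (n - 2 * (real n)\<^sup>2 / x) \<le> ereal (x * tail (stpeter_sum n) x)"
      using order.trans[OF tail_stpeter_sum_ratio_ge tail_stpeter_sum_ratio_le_mult] by simp
  qed
  finally show ?thesis .
qed

lemma Limsup_tail_stpeter_sum_le:
  "Limsup at_top (\<lambda>x. ereal (x * tail (stpeter_sum n) x)) \<le> ereal (2 * real n)"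
proof (rule ereal_le_epsilon2)
  fix e :: real
  assume "0 < e"
  then have "Limsup at_top (\<lambda>x. ereal (x * tail (stpeter_sum n) x)) \<le> ereal (2 * real n + e)"
    by (intro Limsup_bounded) (auto elim: eventually_mono[OF mult_tail_stpeter_sum_eventually_le])
  then show "Limsup at_top (\<lambda>x. ereal (x * tail (stpeter_sum n) x)) \<le> ereal (2 * real n) + ereal e"
    by simp
qed

lemma Limsup_tail_stpeter_sum_ge:
  "ereal (2 * real n) \<le> Limsup at_top (\<lambda>x. ereal (x * tail (stpeter_sum n) x))"
proof -
  define x :: "nat \<Rightarrow> real" where "x k = 2 ^ (k + 1) - 1" for k
  define t :: "nat \<Rightarrow> real" where "t k = (1 / 2) ^ k" for k
  have pow: "1 \<le> (2::real) ^ k" for k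
    by simp
  then have T: "tail stpeter (x k) = t k" for k
    by (simp add: x_def t_def tail_stpeter_eq power_one_over)
  have low: "n * (2 - t k) - (real n)\<^sup>2 * (2 - t k) * t k \<le> x k * tail (stpeter_sum n) (x k)" for k
  proof -
    have xt: "x k * t k = 2 - t k"
      by (simp add: x_def t_def field_simps)
    have "0 \<le> x k"
      using pow[of "k + 1"] by (simp add: x_def)
    then have "x k * (n * t k - (n * t k)\<^sup>2) \<le> x k * tail (stpeter_sum n) (x k)"
      using tail_stpeter_sum_ge[of n "x k"] by (simp add: T mult_left_mono)
    moreover have "x k * (n * t k - (n * t k)\<^sup>2) = n * (x k * t k) - (real n)\<^sup>2 * (x k * t k) * t k"
      by (simp add: algebra_simps power2_eq_square)
    ultimately show ?thesis
      unfolding xt by simp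
  qed
  have "t \<longlonglongrightarrow> 0"
    unfolding t_def by (intro LIMSEQ_power_zero) simp
  then have "(\<lambda>k. ereal (n * (2 - t k) - (real n)\<^sup>2 * (2 - t k) * t k))
               \<longlonglongrightarrow> ereal (real n * (2 - 0) - (real n)\<^sup>2 * (2 - 0) * 0)"
    by (intro tendsto_intros)
  then have "ereal (2 * real n) = limsup (\<lambda>k. ereal (n * (2 - t k) - (real n)\<^sup>2 * (2 - t k) * t k))"
    by (intro lim_imp_Limsup[symmetric]) (simp_all add: mult.commute)
  also have "\<dots> \<le> limsup (\<lambda>k. ereal (x k * tail (stpeter_sum n) (x k)))"
    using low by (intro Limsup_mono always_eventually) simp
  also have "\<dots> \<le> Limsup at_top (\<lambda>x. ereal (x * tail (stpeter_sum n) x))"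
  proof (intro Limsup_compose_filterlim_le filterlim_sequentially_at_top_if_ge)
    show "real k \<le> x k" for k
      using pow[of k] of_nat_less_two_power[of k, where 'a = real]
      unfolding x_def power_add power_one_right by linarith
  qed
  finally show ?thesis .
qed

lemma Liminf_tail_stpeter_sum_le_mult:
  fixes t :: real
  assumes "0 < t" "t < 1"
  shows "Liminf at_top (\<lambda>x. ereal (x * tail (stpeter_sum n) x)) \<le> ereal ((1 + t) * real n)"
proof -
  define \<delta> where "\<delta> = log 2 (1 + t)"
  have \<delta>: "0 < \<delta>" "\<delta> < 1"
    using assms by (simp_all add: \<delta>_def log_less_iff)
  define x :: "nat \<Rightarrow> real" where "x k = 2 ^ k * (1 + t)" for k
  have T: "tail stpeter (x k) = 1 / 2 ^ k" for k
    using assms by (intro tail_stpeter_eq) (simp_all add: x_def)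
  have "frac (log 2 (x k)) = \<delta>" for k
  proof -
    have "log 2 (x k) = of_int (int k) + \<delta>"
      using assms by (simp add: x_def \<delta>_def log_mult)
    then show ?thesis
      using \<delta> by (simp add: frac_unique_iff)
  qed
  moreover have "real k \<le> x k" for k
  proof -
    have "(2::real) ^ k * 1 \<le> 2 ^ k * (1 + t)"
      using assms by (intro mult_left_mono) auto
    then show ?thesis
      using of_nat_less_two_power[of k, where 'a = real] unfolding x_def by linarith
  qed
  ultimately have "filterlim x (at_top \<sqinter> principal {x. \<delta> \<le> frac (log 2 x)}) sequentially"
    by (simp add: filterlim_inf filterlim_principal filterlim_sequentially_at_top_if_ge)
  then have "(\<lambda>k. tail (stpeter_sum n) (x k) / tail stpeter (x k)) \<longlonglongrightarrow> n"
    by (rule filterlim_compose[OF tail_stpeter_sum_ratio_tendsto[OF \<delta>(1)]])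
  then have "(\<lambda>k. ereal ((1 + t) * (tail (stpeter_sum n) (x k) / tail stpeter (x k))))
               \<longlonglongrightarrow> ereal ((1 + t) * real n)"
    by (intro tendsto_intros)
  moreover have "(1 + t) * (tail (stpeter_sum n) (x k) / tail stpeter (x k))
                   = x k * tail (stpeter_sum n) (x k)" for k
    unfolding T by (simp add: x_def)
  ultimately have "liminf (\<lambda>k. ereal (x k * tail (stpeter_sum n) (x k))) = ereal ((1 + t) * real n)"
    by (intro lim_imp_Liminf) simp_all
  moreover have "Liminf at_top (\<lambda>x. ereal (x * tail (stpeter_sum n) x))
                   \<le> liminf (\<lambda>k. ereal (x k * tail (stpeter_sum n) (x k)))"
    by (intro Liminf_compose_filterlim_ge filterlim_sequentially_at_top_if_ge) fact
  ultimately show ?thesis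
    by simp
qed

lemma Liminf_tail_stpeter_sum_le:
  "Liminf at_top (\<lambda>x. ereal (x * tail (stpeter_sum n) x)) \<le> ereal n"
proof (rule ereal_le_epsilon2)
  fix e :: real
  assume e: "0 < e"
  define t where "t = min (1 / 2) (e / (n + 1))"
  have "t * n \<le> e / (n + 1) * (n + 1)"
    unfolding t_def using e by (intro mult_mono) auto
  also have "\<dots> = e"
    by simp
  finally have "(1 + t) * n \<le> n + e"
    by (simp add: algebra_simps)
  moreover have "0 < t" "t < 1"
    using e by (simp_all add: t_def)
  ultimately show "Liminf at_top (\<lambda>x. ereal (x * tail (stpeter_sum n) x)) \<le> ereal n + ereal e"
    using Liminf_tail_stpeter_sum_le_mult[where t = t and n = n] by (simp add: order.trans)
qed

theorem mainTheorem11: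
  fixes n :: nat and \<delta> :: real
  assumes "n \<ge> 1" and "\<delta> > 0"
  shows "((\<lambda>x. measure_pmf.prob (stpeter_sum n) {x<..} / measure_pmf.prob stpeter {x<..})
            \<longlongrightarrow> real n) (at_top \<sqinter> principal {x. frac (log 2 x) \<ge> \<delta>})
         \<and> Liminf at_top (\<lambda>x. ereal (x * measure_pmf.prob (stpeter_sum n) {x<..})) = ereal (real n)
         \<and> Liminf at_top (\<lambda>x. ereal (x * measure_pmf.prob (stpeter_sum n) {x<..}))
             < Limsup at_top (\<lambda>x. ereal (x * measure_pmf.prob (stpeter_sum n) {x<..}))
         \<and> Limsup at_top (\<lambda>x. ereal (x * measure_pmf.prob (stpeter_sum n) {x<..})) = ereal (2 * real n)"
proof -
  have "Liminf at_top (\<lambda>x. ereal (x * tail (stpeter_sum n) x)) = ereal n"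
    by (intro antisym Liminf_tail_stpeter_sum_le Liminf_tail_stpeter_sum_ge)
  moreover have "Limsup at_top (\<lambda>x. ereal (x * tail (stpeter_sum n) x)) = ereal (2 * real n)"
    by (intro antisym Limsup_tail_stpeter_sum_le Limsup_tail_stpeter_sum_ge)
  moreover have "ereal n < ereal (2 * real n)"
    using assms(1) by simp
  ultimately show ?thesis
    using tail_stpeter_sum_ratio_tendsto[OF assms(2), of n] by (simp add: tail_def)
qed

end
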